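(* Let $\phi_0 := 1 - \dfrac{(a\beta_0 - \sqrt{r})^2}{a\mu + r}$ and $\phi_1 := \dfrac{a^2\beta_0^2 + a\mu}{a\mu + r}$. Then: (1) $a\beta_0 - 2\sqrt{r} < \dfrac{\mu}{\beta_0}$ if and only if $\phi_0 > 0$; (2) $\mathcal{R}_0 > \phi_1$; (3) if $a\beta_0 < \sqrt{r}$, then $\phi_1 < 1$; (4) $a\beta_0 < \sqrt{r}$ if and only if $\phi_1 < \phi_0$.
   Context: Consider the autonomous planar system $\dot S = S(A-S) - \beta_0 I S$, $\dot I = \beta_0 I S - \mu I - \dfrac{rI}{a+I}$ on $(\mathbb{R}_0^+)^2$, with all parameters $A, r, \beta_0, a, \mu$ positive (here $\mu$ denotes the sum of the natural death rate and the disease death rate). The basic reproduction number is $\mathcal{R}_0 = \dfrac{\beta_0 A}{\mu + r/a}$. It is assumed that $S(t)\le A$ for all $t\ge 0$. Let $\Delta = \left(a\beta_0 + A - \frac{\mu}{\beta_0}\right)^2 - 4r > 0$, so that the system has two endemic equilibria $E_3=(S_3,I_3)$, $E_4=(S_4,I_4)$ with $S_{3,4} = \dfrac{a\beta_0 + A + \frac{\mu}{\beta_0} \mp \sqrt{\Delta}}{2}$, $I_j = (A-S_j)/\beta_0$, and these satisfy $S_3 < S_4 < A$ (this is used for item (2)). *)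

theory Defs
  imports Complex_Main
begin

definition R0 :: "real \<Rightarrow> real \<Rightarrow> real \<Rightarrow> real \<Rightarrow> real \<Rightarrow> real" where
  "R0 A r \<beta>0 a \<mu> = \<beta>0 * A / (\<mu> + r / a)"

definition Delta :: "real \<Rightarrow> real \<Rightarrow> real \<Rightarrow> real \<Rightarrow> real \<Rightarrow> real" where
  "Delta A r \<beta>0 a \<mu> = (a * \<beta>0 + A - \<mu> / \<beta>0)\<^sup>2 - 4 * r"

definition S3 :: "real \<Rightarrow> real \<Rightarrow> real \<Rightarrow> real \<Rightarrow> real \<Rightarrow> real" where
  "S3 A r \<beta>0 a \<mu> = (a * \<beta>0 + A + \<mu> / \<beta>0 - sqrt (Delta A r \<beta>0 a \<mu>)) / 2"

definition S4 :: "real \<Rightarrow> real \<Rightarrow> real \<Rightarrow> real \<Rightarrow> real \<Rightarrow> real" where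
  "S4 A r \<beta>0 a \<mu> = (a * \<beta>0 + A + \<mu> / \<beta>0 + sqrt (Delta A r \<beta>0 a \<mu>)) / 2"

definition phi0 :: "real \<Rightarrow> real \<Rightarrow> real \<Rightarrow> real \<Rightarrow> real" where
  "phi0 r \<beta>0 a \<mu> = 1 - (a * \<beta>0 - sqrt r)\<^sup>2 / (a * \<mu> + r)"

definition phi1 :: "real \<Rightarrow> real \<Rightarrow> real \<Rightarrow> real \<Rightarrow> real" where
  "phi1 r \<beta>0 a \<mu> = (a\<^sup>2 * \<beta>0\<^sup>2 + a * \<mu>) / (a * \<mu> + r)"

end

theory Submission
  imports Defs
begin

text \<open>Over the common positive denominator \<open>a\<mu> + r\<close>, each of \<open>phi0\<close>, \<open>1 - phi1\<close>,
  \<open>phi0 - phi1\<close> and \<open>R0 - phi1\<close> factors into positive terms and one factor whose sign is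
  exactly the comparison in the corresponding item. For item (2) that factor is
  \<open>A - a\<beta>0 - \<mu>/\<beta>0\<close>, which is positive because \<open>S4 < A\<close>.\<close>

lemma phi0_eq:
  assumes "r \<ge> 0" and "\<beta>0 \<noteq> 0" and "a * \<mu> + r \<noteq> 0"
  shows "phi0 r \<beta>0 a \<mu> = a * \<beta>0 * (\<mu> / \<beta>0 + 2 * sqrt r - a * \<beta>0) / (a * \<mu> + r)"
proof -
  have "phi0 r \<beta>0 a \<mu> = (a * \<mu> + r - (a * \<beta>0 - sqrt r)\<^sup>2) / (a * \<mu> + r)"
    using assms by (simp add: phi0_def field_simps)
  also have "a * \<mu> + r - (a * \<beta>0 - sqrt r)\<^sup>2 = a * \<beta>0 * (\<mu> / \<beta>0 + 2 * sqrt r - a * \<beta>0)"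
    using assms by (simp add: power2_diff power2_eq_square field_simps)
  finally show ?thesis .
qed

lemma one_minus_phi1_eq:
  assumes "r \<ge> 0" and "a * \<mu> + r \<noteq> 0"
  shows "1 - phi1 r \<beta>0 a \<mu> = (sqrt r - a * \<beta>0) * (sqrt r + a * \<beta>0) / (a * \<mu> + r)"
proof -
  have "1 - phi1 r \<beta>0 a \<mu> = (r - a\<^sup>2 * \<beta>0\<^sup>2) / (a * \<mu> + r)"
    using assms by (simp add: phi1_def field_simps)
  also have "r - a\<^sup>2 * \<beta>0\<^sup>2 = (sqrt r - a * \<beta>0) * (sqrt r + a * \<beta>0)"
    using assms by (simp add: algebra_simps power2_eq_square flip: power2_eq_square[of "sqrt r"])
  finally show ?thesis .
qed

lemma phi0_minus_phi1_eq:
  assumes "r \<ge> 0" and "a * \<mu> + r \<noteq> 0"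
  shows "phi0 r \<beta>0 a \<mu> - phi1 r \<beta>0 a \<mu> = 2 * a * \<beta>0 * (sqrt r - a * \<beta>0) / (a * \<mu> + r)"
proof -
  have "phi0 r \<beta>0 a \<mu> - phi1 r \<beta>0 a \<mu>
      = (a * \<mu> + r - (a * \<beta>0 - sqrt r)\<^sup>2 - (a\<^sup>2 * \<beta>0\<^sup>2 + a * \<mu>)) / (a * \<mu> + r)"
    unfolding phi0_def phi1_def diff_divide_distrib using assms by simp
  also have "a * \<mu> + r - (a * \<beta>0 - sqrt r)\<^sup>2 - (a\<^sup>2 * \<beta>0\<^sup>2 + a * \<mu>)
      = 2 * a * \<beta>0 * (sqrt r - a * \<beta>0)"
    using assms by (simp add: power2_diff power2_eq_square algebra_simps)
  finally show ?thesis .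
qed

lemma R0_minus_phi1_eq:
  assumes "a \<noteq> 0" and "\<beta>0 \<noteq> 0" and "a * \<mu> + r \<noteq> 0"
  shows "R0 A r \<beta>0 a \<mu> - phi1 r \<beta>0 a \<mu>
    = a * \<beta>0 * (A - a * \<beta>0 - \<mu> / \<beta>0) / (a * \<mu> + r)"
proof -
  have "R0 A r \<beta>0 a \<mu> = a * \<beta>0 * A / (a * \<mu> + r)"
    using assms by (simp add: R0_def field_simps)
  then have "R0 A r \<beta>0 a \<mu> - phi1 r \<beta>0 a \<mu>
      = (a * \<beta>0 * A - (a\<^sup>2 * \<beta>0\<^sup>2 + a * \<mu>)) / (a * \<mu> + r)"
    unfolding phi1_def diff_divide_distrib by simp
  also have "a * \<beta>0 * A - (a\<^sup>2 * \<beta>0\<^sup>2 + a * \<mu>) = a * \<beta>0 * (A - a * \<beta>0 - \<mu> / \<beta>0)"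
    using assms by (simp add: power2_eq_square field_simps)
  finally show ?thesis .
qed

lemma S4_less_imp_sum_less:
  assumes "Delta A r \<beta>0 a \<mu> \<ge> 0" and "S4 A r \<beta>0 a \<mu> < A"
  shows "a * \<beta>0 + \<mu> / \<beta>0 < A"
proof -
  have "a * \<beta>0 + A + \<mu> / \<beta>0 + sqrt (Delta A r \<beta>0 a \<mu>) < 2 * A"
    using assms(2) unfolding S4_def by simp
  moreover have "sqrt (Delta A r \<beta>0 a \<mu>) \<ge> 0"
    using assms(1) by simp
  ultimately show ?thesis
    by linarith
qed

theorem lemma5p2:
  fixes A r \<beta>0 a \<mu> :: real
  assumes "A > 0" and "r > 0" and "\<beta>0 > 0" and "a > 0" and "\<mu> > 0"
    and "Delta A r \<beta>0 a \<mu> > 0"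
    and "S3 A r \<beta>0 a \<mu> < S4 A r \<beta>0 a \<mu>" and "S4 A r \<beta>0 a \<mu> < A"
  shows "(a * \<beta>0 - 2 * sqrt r < \<mu> / \<beta>0 \<longleftrightarrow> phi0 r \<beta>0 a \<mu> > 0)
       \<and> R0 A r \<beta>0 a \<mu> > phi1 r \<beta>0 a \<mu>
       \<and> (a * \<beta>0 < sqrt r \<longrightarrow> phi1 r \<beta>0 a \<mu> < 1)
       \<and> (a * \<beta>0 < sqrt r \<longleftrightarrow> phi1 r \<beta>0 a \<mu> < phi0 r \<beta>0 a \<mu>)"
proof -
  have den: "a * \<mu> + r > 0" and pos: "a * \<beta>0 > 0" and "r \<ge> 0"
    using assms by (simp_all add: add_pos_pos)
  have "phi0 r \<beta>0 a \<mu> > 0 \<longleftrightarrow> \<mu> / \<beta>0 + 2 * sqrt r - a * \<beta>0 > 0"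
    using phi0_eq[of r \<beta>0 a \<mu>] assms den
    by (simp add: zero_less_divide_iff zero_less_mult_iff mult_less_0_iff)
  moreover have "R0 A r \<beta>0 a \<mu> - phi1 r \<beta>0 a \<mu> > 0"
    using R0_minus_phi1_eq[of a \<beta>0 \<mu> r A] S4_less_imp_sum_less[of A r \<beta>0 a \<mu>] assms den pos
    by simp
  moreover have "a * \<beta>0 < sqrt r \<longrightarrow> 1 - phi1 r \<beta>0 a \<mu> > 0"
    using one_minus_phi1_eq[of r a \<mu> \<beta>0] \<open>r \<ge> 0\<close> den pos by simp
  moreover have "phi0 r \<beta>0 a \<mu> - phi1 r \<beta>0 a \<mu> > 0 \<longleftrightarrow> sqrt r - a * \<beta>0 > 0"
    using phi0_minus_phi1_eq[of r a \<mu> \<beta>0] assms den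
    by (simp add: zero_less_divide_iff zero_less_mult_iff mult_less_0_iff)
  ultimately show ?thesis
    by auto
qed

end
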